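(* Let $K$ be a field and $E$ a row-finite graph with a fixed choice of special edges. Let $x=x_1\dots x_m$ ($m\ge 1$) be a cycle in $E$ all of whose edges are special and which has an exit. Let $(F_x,\phi_x)$ be the extended representation graph associated to $x$ (regarded as a closed path in $E_d$ consisting only of real edges), and let $W=W(F_x,\phi_x)$ be the associated right $L(E)$-module. Then $W$ is not a simple $L(E)$-module, and $\operatorname{End}_{L(E)}(W)\cong K$ as rings.
   Context: Let $E=(E^0,E^1,s,r)$ be a row-finite directed graph (no vertex emits infinitely many edges). A vertex is regular if it emits at least one edge. For every regular vertex $v$ a fixed edge $e^v\in s^{-1}(v)$ is chosen; these edges are called special, all other edges nonspecial. A path of length $n\ge 1$ is a word $y_1\dots y_n$ of edges with $r(y_i)=s(y_{i+1})$; a path of length $0$ is a vertex $v$ with $s(v)=r(v)=v$. A cycle is a path $x_1\dots x_m$ of length $\ge1$ with $s(x_1)=r(x_m)$ and $s(x_i)\ne s(x_j)$ for $i\neq j$; an exit of it is an edge $e$ with $s(e)=s(x_i)$ and $e\ne x_i$ for some $i$. The double graph $E_d$ has vertex set $E^0$ and edges $\{e,e^*: e\in E^1\}$ with $s_d(e)=s(e)$, $r_d(e)=r(e)$, $s_d(e^* )=r(e)$, $r_d(e^* )=s(e)$; the $e$ are real edges, the $e^*$ ghost edges. For a path $p=e_1\dots e_n$ in $E$ set $p^*=e_n^*\dots e_1^*$. The set $X$ of basis paths consists of the following paths in $E_d$: all vertices $v\in E^0$; all $p$ and $p^*$ with $p$ a path of length $\ge1$ in $E$; all $pq^*$ with $p=e_1\dots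 e_k$, $q=f_1\dots f_n$ paths of length $\ge 1$ in $E$, $r(p)=r(q)$, and either $e_k\ne f_n$ or $e_k=f_n$ nonspecial. The Leavitt path algebra $L(E)$ is the $K$-algebra generated by $\{v,e,e^*: v\in E^0,e\in E^1\}$ subject to $uv=\delta_{uv}u$; $s(e)e=e=er(e)$, $r(e)e^*=e^*=e^*s(e)$; $e^*f=\delta_{ef}r(e)$; and $\sum_{e\in s^{-1}(v)}ee^*=v$ for every regular $v$. For $x=x_1\dots x_m$ a closed path of length $\ge1$ in $E_d$ consisting only of real edges (or only of ghost edges), and $1\le i\le m$, let $X_i$ be the set of basis paths $y=y_1\dots y_n$ of length $n\ge 1$ such that $x_iy_1$ is a basis path and $y_1\ne x_{i+1}$ (with $x_{m+1}=x_1$). The graph $F_x$ has vertices $w_i$ ($1\le i\le m$) and $w_{i,y}$ ($1\le i\le m$, $y\in X_i$), all distinct, and edges $f_i$ from $w_{i-1}$ to $w_i$ (with $w_0=w_m$) and $f_{i,y}$ with range $w_{i,y}$ and source $w_i$ if $|y|=1$, resp. $w_{i,y_1\dots y_{n-1}}$ if $y=y_1\dots y_n$, $n\ge2$. The homomorphism $\phi_x:F_x\to E_d$ is given by $\phi_x(w_i)=r_d(x_i)$, $\phi_x(w_{i,y})=r_d(y)$, $\phi_x(f_i)=x_i$, $\phi_x(f_{i,y})=$ the last edge of $y$. For such a pair $(F,\phi)$ (a graph $F$ with a graph homomorphism $\phi:F\to E_d$), $W(F,\phi)$ is the $K$-vector space with basis $F^0$, made into a right $L(E)$-module by the following action on basis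 vertices $w\in F^0$ (for $v\in E^0$, $e\in E^1$): $w.v=w$ if $\phi(w)=v$ and $0$ otherwise; $w.e=r(f)$ if some $f\in s^{-1}(w)$ has $\phi(f)=e$, $w.e=s(f)$ if some $f\in r^{-1}(w)$ has $\phi(f)=e^*$, and $w.e=0$ otherwise; $w.e^*=r(f)$ if some $f\in s^{-1}(w)$ has $\phi(f)=e^*$, $w.e^*=s(f)-T$ if $e$ is special and some $f\in r^{-1}(w)$ has $\phi(f)=e$, where $T=\sum r(p)$ over all paths $p$ in $F$ starting at $s(f)$ with $\phi(p)=dd^*$ for some $d\in s^{-1}(s(e))\setminus\{e\}$, and $w.e^*=0$ otherwise. (This extends uniquely to a right $L(E)$-module structure.) *)

theory Defs
  imports Main "HOL-Library.Function_Algebras"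
begin

record ('v,'e) dgraph =
  verts :: "'v set"
  edges :: "'e set"
  src   :: "'e \<Rightarrow> 'v"
  rng   :: "'e \<Rightarrow> 'v"

definition wf_graph :: "('v,'e) dgraph \<Rightarrow> bool" where
  "wf_graph E \<longleftrightarrow> (\<forall>e\<in>edges E. src E e \<in> verts E \<and> rng E e \<in> verts E)"

definition row_finite :: "('v,'e) dgraph \<Rightarrow> bool" where
  "row_finite E \<longleftrightarrow> (\<forall>v\<in>verts E. finite {e\<in>edges E. src E e = v})"

definition regular :: "('v,'e) dgraph \<Rightarrow> 'v \<Rightarrow> bool" where
  "regular E v \<longleftrightarrow> v \<in> verts E \<and> (\<exists>e\<in>edges E. src E e = v)"

definition special_choice :: "('v,'e) dgraph \<Rightarrow> ('v \<Rightarrow> 'e) \<Rightarrow> bool" where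
  "special_choice E sp \<longleftrightarrow>
     (\<forall>v. regular E v \<longrightarrow> sp v \<in> edges E \<and> src E (sp v) = v)"

definition special :: "('v,'e) dgraph \<Rightarrow> ('v \<Rightarrow> 'e) \<Rightarrow> 'e \<Rightarrow> bool" where
  "special E sp e \<longleftrightarrow> e \<in> edges E \<and> sp (src E e) = e"

definition is_cycle :: "('v,'e) dgraph \<Rightarrow> 'e list \<Rightarrow> bool" where
  "is_cycle E x \<longleftrightarrow> x \<noteq> [] \<and> set x \<subseteq> edges E
     \<and> (\<forall>j. Suc j < length x \<longrightarrow> rng E (x!j) = src E (x!Suc j))
     \<and> src E (hd x) = rng E (last x)
     \<and> inj_on (\<lambda>j. src E (x!j)) {..<length x}"

definition has_exit :: "('v,'e) dgraph \<Rightarrow> 'e list \<Rightarrow> bool" where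
  "has_exit E x \<longleftrightarrow> (\<exists>e\<in>edges E. \<exists>i<length x. src E e = src E (x!i) \<and> e \<noteq> x!i)"

datatype 'e dedge = Real 'e | Ghost 'e

fun d_src :: "('v,'e) dgraph \<Rightarrow> 'e dedge \<Rightarrow> 'v" where
  "d_src E (Real e) = src E e"
| "d_src E (Ghost e) = rng E e"

fun d_rng :: "('v,'e) dgraph \<Rightarrow> 'e dedge \<Rightarrow> 'v" where
  "d_rng E (Real e) = rng E e"
| "d_rng E (Ghost e) = src E e"

fun d_base :: "'e dedge \<Rightarrow> 'e" where
  "d_base (Real e) = e"
| "d_base (Ghost e) = e"

definition d_path :: "('v,'e) dgraph \<Rightarrow> 'e dedge list \<Rightarrow> bool" where
  "d_path E ys \<longleftrightarrow> ys \<noteq> [] \<and> (\<forall>y\<in>set ys. d_base y \<in> edges E)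
     \<and> (\<forall>j. Suc j < length ys \<longrightarrow> d_rng E (ys!j) = d_src E (ys!Suc j))"

definition basis_path :: "('v,'e) dgraph \<Rightarrow> ('v \<Rightarrow> 'e) \<Rightarrow> 'e dedge list \<Rightarrow> bool" where
  "basis_path E sp ys \<longleftrightarrow> d_path E ys \<and>
     (\<exists>p q. ys = map Real p @ map Ghost (rev q) \<and>
        (p = [] \<or> q = [] \<or> last p \<noteq> last q \<or> \<not> special E sp (last p)))"

datatype 'e fvert = Wm nat | Wb nat "'e dedge list"
datatype 'e fedge = Fm nat | Fb nat "'e dedge list"

text \<open>x_i for 1 \<le> i \<le> m, with x_{m+1} = x_1 and w_0 = w_m.\<close>
definition cyc_nth :: "'e list \<Rightarrow> nat \<Rightarrow> 'e" where
  "cyc_nth x i = x ! ((i - 1) mod length x)"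

definition Xset :: "('v,'e) dgraph \<Rightarrow> ('v \<Rightarrow> 'e) \<Rightarrow> 'e list \<Rightarrow> nat \<Rightarrow> 'e dedge list set" where
  "Xset E sp x i = {y. basis_path E sp y \<and> basis_path E sp [Real (cyc_nth x i), hd y]
                      \<and> hd y \<noteq> Real (cyc_nth x (Suc i))}"

definition Fx :: "('v,'e) dgraph \<Rightarrow> ('v \<Rightarrow> 'e) \<Rightarrow> 'e list \<Rightarrow> ('e fvert, 'e fedge) dgraph" where
  "Fx E sp x = \<lparr>
     verts = {Wm i | i. 1 \<le> i \<and> i \<le> length x}
             \<union> {Wb i y | i y. 1 \<le> i \<and> i \<le> length x \<and> y \<in> Xset E sp x i},
     edges = {Fm i | i. 1 \<le> i \<and> i \<le> length x}
             \<union> {Fb i y | i y. 1 \<le> i \<and> i \<le> length x \<and> y \<in> Xset E sp x i},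
     src = (\<lambda>f. case f of
              Fm i \<Rightarrow> Wm (if i = 1 then length x else i - 1)
            | Fb i y \<Rightarrow> (if length y = 1 then Wm i else Wb i (butlast y))),
     rng = (\<lambda>f. case f of Fm i \<Rightarrow> Wm i | Fb i y \<Rightarrow> Wb i y) \<rparr>"

definition phiV_x :: "('v,'e) dgraph \<Rightarrow> 'e list \<Rightarrow> 'e fvert \<Rightarrow> 'v" where
  "phiV_x E x w = (case w of Wm i \<Rightarrow> rng E (cyc_nth x i) | Wb i y \<Rightarrow> d_rng E (last y))"

definition phiE_x :: "'e list \<Rightarrow> 'e fedge \<Rightarrow> 'e dedge" where
  "phiE_x x f = (case f of Fm i \<Rightarrow> Real (cyc_nth x i) | Fb i y \<Rightarrow> last y)"

text \<open>W(F,phi): the K-vector space with basis F^0, realised as finitely supported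
  functions F^0 \<rightarrow> K.\<close>
definition Wsp :: "('w,'f) dgraph \<Rightarrow> ('w \<Rightarrow> 'k::field) set" where
  "Wsp F = {c. {w. c w \<noteq> 0} \<subseteq> verts F \<and> finite {w. c w \<noteq> 0}}"

definition bvec :: "'w \<Rightarrow> 'w \<Rightarrow> 'k::field" where
  "bvec w = (\<lambda>u. if u = w then 1 else 0)"

text \<open>Generators of L(E): vertices v, real edges e, ghost edges e*.\<close>
datatype ('v,'e) gen = Gv 'v | Ge 'e | Gs 'e

definition gens :: "('v,'e) dgraph \<Rightarrow> ('v,'e) gen set" where
  "gens E = Gv ` verts E \<union> Ge ` edges E \<union> Gs ` edges E"

definition Tsum :: "('v,'e) dgraph \<Rightarrow> ('w,'f) dgraph \<Rightarrow> ('f \<Rightarrow> 'e dedge)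
                    \<Rightarrow> 'e \<Rightarrow> 'f \<Rightarrow> 'w \<Rightarrow> 'k::field" where
  "Tsum E F phiE e f = (\<lambda>u. of_nat (card {(g1,g2). g1 \<in> edges F \<and> g2 \<in> edges F
        \<and> src F g1 = src F f \<and> rng F g1 = src F g2 \<and> rng F g2 = u
        \<and> (\<exists>d\<in>edges E. src E d = src E e \<and> d \<noteq> e
             \<and> phiE g1 = Real d \<and> phiE g2 = Ghost d)}))"

definition gen_act :: "('v,'e) dgraph \<Rightarrow> ('v \<Rightarrow> 'e) \<Rightarrow> ('w,'f) dgraph \<Rightarrow> ('w \<Rightarrow> 'v)
     \<Rightarrow> ('f \<Rightarrow> 'e dedge) \<Rightarrow> 'w \<Rightarrow> ('v,'e) gen \<Rightarrow> ('w \<Rightarrow> 'k::field)" where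
  "gen_act E sp F phiV phiE w g = (case g of
     Gv v \<Rightarrow> (if phiV w = v then bvec w else 0)
   | Ge e \<Rightarrow>
       (if \<exists>f\<in>edges F. src F f = w \<and> phiE f = Real e
        then bvec (rng F (SOME f. f \<in> edges F \<and> src F f = w \<and> phiE f = Real e))
        else if \<exists>f\<in>edges F. rng F f = w \<and> phiE f = Ghost e
        then bvec (src F (SOME f. f \<in> edges F \<and> rng F f = w \<and> phiE f = Ghost e))
        else 0)
   | Gs e \<Rightarrow>
       (if \<exists>f\<in>edges F. src F f = w \<and> phiE f = Ghost e
        then bvec (rng F (SOME f. f \<in> edges F \<and> src F f = w \<and> phiE f = Ghost e))
        else if special E sp e \<and> (\<exists>f\<in>edges F. rng F f = w \<and> phiE f = Real e)
        then (let f = (SOME f. f \<in> edges F \<and> rng F f = w \<and> phiE f = Real e)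
              in bvec (src F f) - Tsum E F phiE e f)
        else 0))"

definition lin_act :: "('v,'e) dgraph \<Rightarrow> ('v \<Rightarrow> 'e) \<Rightarrow> ('w,'f) dgraph \<Rightarrow> ('w \<Rightarrow> 'v)
     \<Rightarrow> ('f \<Rightarrow> 'e dedge) \<Rightarrow> ('v,'e) gen \<Rightarrow> ('w \<Rightarrow> 'k::field) \<Rightarrow> ('w \<Rightarrow> 'k)" where
  "lin_act E sp F phiV phiE g c =
     (\<lambda>u. \<Sum>w\<in>{w. c w \<noteq> 0}. c w * gen_act E sp F phiV phiE w g u)"

text \<open>L(E)-submodules of W(F,phi): K-subspaces closed under the action of the
  generators of L(E) (equivalently, of all of L(E), which they generate as an algebra).\<close>
definition submodule :: "('v,'e) dgraph \<Rightarrow> ('v \<Rightarrow> 'e) \<Rightarrow> ('w,'f) dgraph \<Rightarrow> ('w \<Rightarrow> 'v)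
     \<Rightarrow> ('f \<Rightarrow> 'e dedge) \<Rightarrow> ('w \<Rightarrow> 'k::field) set \<Rightarrow> bool" where
  "submodule E sp F phiV phiE U \<longleftrightarrow> U \<subseteq> Wsp F \<and> 0 \<in> U
     \<and> (\<forall>c\<in>U. \<forall>d\<in>U. c + d \<in> U) \<and> (\<forall>a. \<forall>c\<in>U. (\<lambda>u. a * c u) \<in> U)
     \<and> (\<forall>g\<in>gens E. \<forall>c\<in>U. lin_act E sp F phiV phiE g c \<in> U)"

definition simple_module :: "('v,'e) dgraph \<Rightarrow> ('v \<Rightarrow> 'e) \<Rightarrow> ('w,'f) dgraph \<Rightarrow> ('w \<Rightarrow> 'v)
     \<Rightarrow> ('f \<Rightarrow> 'e dedge) \<Rightarrow> 'k::field itself \<Rightarrow> bool" where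
  "simple_module E sp F phiV phiE (_::'k itself) \<longleftrightarrow>
     (Wsp F :: ('w \<Rightarrow> 'k) set) \<noteq> {0} \<and>
     (\<forall>U :: ('w \<Rightarrow> 'k) set. submodule E sp F phiV phiE U \<longrightarrow> U = {0} \<or> U = Wsp F)"

definition End_mod :: "('v,'e) dgraph \<Rightarrow> ('v \<Rightarrow> 'e) \<Rightarrow> ('w,'f) dgraph \<Rightarrow> ('w \<Rightarrow> 'v)
     \<Rightarrow> ('f \<Rightarrow> 'e dedge) \<Rightarrow> (('w \<Rightarrow> 'k::field) \<Rightarrow> ('w \<Rightarrow> 'k)) set" where
  "End_mod E sp F phiV phiE = {h.
      (\<forall>c\<in>Wsp F. h c \<in> Wsp F)
    \<and> (\<forall>c\<in>Wsp F. \<forall>d\<in>Wsp F. h (c + d) = h c + h d)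
    \<and> (\<forall>a. \<forall>c\<in>Wsp F. h (\<lambda>u. a * c u) = (\<lambda>u. a * h c u))
    \<and> (\<forall>g\<in>gens E. \<forall>c\<in>Wsp F. h (lin_act E sp F phiV phiE g c) = lin_act E sp F phiV phiE g (h c))
    \<and> (\<forall>c. c \<notin> Wsp F \<longrightarrow> h c = undefined)}"

text \<open>Ring isomorphism K \<cong> End (ring structure of End: pointwise sum, composition, identity).\<close>
definition ring_iso_to_End :: "('w,'f) dgraph \<Rightarrow> (('w \<Rightarrow> 'k::field) \<Rightarrow> ('w \<Rightarrow> 'k)) set
      \<Rightarrow> ('k \<Rightarrow> (('w \<Rightarrow> 'k) \<Rightarrow> ('w \<Rightarrow> 'k))) \<Rightarrow> bool" where
  "ring_iso_to_End F End \<Phi> \<longleftrightarrow> bij_betw \<Phi> UNIV End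
     \<and> (\<forall>a b. \<forall>c\<in>Wsp F. \<Phi> (a + b) c = \<Phi> a c + \<Phi> b c)
     \<and> (\<forall>a b. \<forall>c\<in>Wsp F. \<Phi> (a * b) c = \<Phi> a (\<Phi> b c))
     \<and> (\<forall>c\<in>Wsp F. \<Phi> 1 c = c)"

end

theory Submission
  imports Defs
begin

(* W = W(F_x, phi_x) has the vertices of F_x as a basis: the cycle w_1, ..., w_m, with a tree of
   basis paths hanging off every w_i. An exit of x leaves some s(x_(i+1)) along an edge e, which is
   nonspecial because the special edge there is x_(i+1). The tree below the leaf w_(i,e) is closed
   under all generators (only the edge labelled e enters it, and e* never acts by the special-edge
   rule), so it spans a nonzero proper submodule.
   Now let h commute with L(E). Acting with x_2, x_3, ... moves w_1 around the cycle, keeps cycle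
   vertices on the cycle and raises the degree (real minus ghost edges) of every tree vertex.
   Since w_1 returns after m steps, h(w_1) involves only cycle vertices, and the idempotent r(x_1)
   cuts it down to a multiple a w_1. Every vertex is reached from w_1 by generators sending basis
   vectors to basis vectors, hence h is multiplication by a. *)

section \<open>Representation modules of graph homomorphisms\<close>

lemma Wsp_zero: "(0 :: 'w \<Rightarrow> 'k::field) \<in> Wsp F"
  by (simp add: Wsp_def)

lemma bvec_in_Wsp: "w \<in> verts F \<Longrightarrow> (bvec w :: 'w \<Rightarrow> 'k::field) \<in> Wsp F"
  by (simp add: Wsp_def bvec_def)

lemma Wsp_if_support_subset:
  assumes "finite S" "S \<subseteq> verts F" "{w. c w \<noteq> 0} \<subseteq> S"
  shows "c \<in> Wsp F"
  using assms finite_subset unfolding Wsp_def by blast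

lemma Wsp_add:
  assumes "c \<in> Wsp F" "d \<in> Wsp F"
  shows "(c + d :: 'w \<Rightarrow> 'k::field) \<in> Wsp F"
proof -
  have "{w. (c + d) w \<noteq> 0} \<subseteq> {w. c w \<noteq> 0} \<union> {w. d w \<noteq> 0}"
    by auto
  then show ?thesis
    using assms unfolding Wsp_def by (auto intro: finite_subset)
qed

lemma Wsp_diff:
  assumes "c \<in> Wsp F" "d \<in> Wsp F"
  shows "(c - d :: 'w \<Rightarrow> 'k::field) \<in> Wsp F"
proof -
  have "{w. (c - d) w \<noteq> 0} \<subseteq> {w. c w \<noteq> 0} \<union> {w. d w \<noteq> 0}"
    by auto
  then show ?thesis
    using assms unfolding Wsp_def by (auto intro: finite_subset)
qed

lemma Wsp_scale: "c \<in> Wsp F \<Longrightarrow> (\<lambda>u. a * c u :: 'k::field) \<in> Wsp F"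
  unfolding Wsp_def by (auto intro: finite_subset)

lemma sum_fun_apply: "(\<Sum>w\<in>S. f w) u = (\<Sum>w\<in>S. f w u)"
  for f :: "'a \<Rightarrow> 'b \<Rightarrow> 'c::comm_monoid_add"
  by (induction S rule: infinite_finite_induct) auto

lemma Wsp_eq_sum_bvec:
  assumes "c \<in> Wsp F"
  shows "c = (\<Sum>w | c w \<noteq> 0. (\<lambda>u. c w * bvec w u :: 'k::field))"
proof
  fix u
  have "finite {w. c w \<noteq> 0}"
    using assms by (simp add: Wsp_def)
  then show "c u = (\<Sum>w | c w \<noteq> 0. (\<lambda>u. c w * bvec w u)) u"
    by (simp add: sum_fun_apply bvec_def sum.delta' if_distrib cong: if_cong)
qed

lemma someI_bex: "\<exists>f\<in>A. P f \<Longrightarrow> (SOME f. f \<in> A \<and> P f) \<in> A \<and> P (SOME f. f \<in> A \<and> P f)"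
  by (metis (mono_tags, lifting) someI_ex)

lemma Tsum_nonzeroD:
  assumes "Tsum E F phiE e f u \<noteq> (0::'k::field)"
  shows "\<exists>g1\<in>edges F. \<exists>g2\<in>edges F. src F g1 = src F f \<and> rng F g1 = src F g2 \<and> rng F g2 = u
     \<and> (\<exists>d\<in>edges E. src E d = src E e \<and> d \<noteq> e \<and> phiE g1 = Real d \<and> phiE g2 = Ghost d)"
proof -
  define S where "S = {(g1,g2). g1 \<in> edges F \<and> g2 \<in> edges F
        \<and> src F g1 = src F f \<and> rng F g1 = src F g2 \<and> rng F g2 = u
        \<and> (\<exists>d\<in>edges E. src E d = src E e \<and> d \<noteq> e
             \<and> phiE g1 = Real d \<and> phiE g2 = Ghost d)}"
  have "Tsum E F phiE e f u = (of_nat (card S) :: 'k)"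
    unfolding Tsum_def S_def by simp
  with assms have "card S \<noteq> 0"
    by (metis of_nat_0)
  then obtain p where "p \<in> S"
    by (metis card.empty ex_in_conv)
  then show ?thesis
    unfolding S_def by (cases p) auto
qed

lemma Tsum_nonzero_path:
  assumes "Tsum E F phiE e f u \<noteq> (0::'k::field)"
  shows "\<exists>g1\<in>edges F. \<exists>g2\<in>edges F. src F g1 = src F f \<and> rng F g1 = src F g2 \<and> rng F g2 = u"
  using Tsum_nonzeroD[OF assms] by blast

lemma gen_act_Gv_nonzeroD:
  "gen_act E sp F phiV phiE w (Gv v) u \<noteq> (0::'k::field) \<Longrightarrow> u = w \<and> phiV w = v"
  by (auto simp: gen_act_def bvec_def split: if_splits)

lemma gen_act_Ge_nonzeroD:
  assumes "gen_act E sp F phiV phiE w (Ge e) u \<noteq> (0::'k::field)"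
  shows "(\<exists>f\<in>edges F. src F f = w \<and> phiE f = Real e \<and> u = rng F f)
       \<or> (\<exists>f\<in>edges F. rng F f = w \<and> phiE f = Ghost e \<and> u = src F f)"
proof -
  let ?out = "\<lambda>f. src F f = w \<and> phiE f = Real e"
  let ?inc = "\<lambda>f. rng F f = w \<and> phiE f = Ghost e"
  have "(\<exists>f\<in>edges F. ?out f) \<and> u = rng F (SOME f. f \<in> edges F \<and> ?out f)
      \<or> (\<exists>f\<in>edges F. ?inc f) \<and> u = src F (SOME f. f \<in> edges F \<and> ?inc f)"
    using assms by (auto simp: gen_act_def bvec_def split: if_splits)
  then show ?thesis
    using someI_bex[of "edges F" ?out] someI_bex[of "edges F" ?inc] by blast
qed

lemma gen_act_Gs_nonzeroD:
  assumes "gen_act E sp F phiV phiE w (Gs e) u \<noteq> (0::'k::field)"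
  shows "(\<exists>f\<in>edges F. src F f = w \<and> phiE f = Ghost e \<and> u = rng F f)
       \<or> special E sp e \<and> (\<exists>f\<in>edges F. rng F f = w \<and> phiE f = Real e
             \<and> (u = src F f \<or> (Tsum E F phiE e f u :: 'k) \<noteq> 0))"
proof -
  let ?out = "\<lambda>f. src F f = w \<and> phiE f = Ghost e"
  let ?inc = "\<lambda>f. rng F f = w \<and> phiE f = Real e"
  let ?f = "SOME f. f \<in> edges F \<and> ?inc f"
  have "(\<exists>f\<in>edges F. ?out f) \<and> u = rng F (SOME f. f \<in> edges F \<and> ?out f)
      \<or> special E sp e \<and> (\<exists>f\<in>edges F. ?inc f) \<and> (u = src F ?f \<or> (Tsum E F phiE e ?f u :: 'k) \<noteq> 0)"
    using assms by (auto simp: gen_act_def bvec_def Let_def split: if_splits)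
  then show ?thesis
    using someI_bex[of "edges F" ?out] someI_bex[of "edges F" ?inc] by blast
qed

context
  fixes E :: "('v,'e) dgraph" and sp :: "'v \<Rightarrow> 'e"
    and F :: "('w,'f) dgraph" and phiV :: "'w \<Rightarrow> 'v" and phiE :: "'f \<Rightarrow> 'e dedge"
begin

abbreviation act :: "('v,'e) gen \<Rightarrow> ('w \<Rightarrow> 'k::field) \<Rightarrow> 'w \<Rightarrow> 'k" where
  "act \<equiv> lin_act E sp F phiV phiE"

abbreviation basis_act :: "'w \<Rightarrow> ('v,'e) gen \<Rightarrow> 'w \<Rightarrow> 'k::field" where
  "basis_act \<equiv> gen_act E sp F phiV phiE"

lemma lin_act_bvec: "act g (bvec w) = (basis_act w g :: 'w \<Rightarrow> 'k::field)"
proof -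
  have "{u. bvec w u \<noteq> (0::'k)} = {w}"
    by (auto simp: bvec_def)
  then show ?thesis
    unfolding lin_act_def by (simp add: bvec_def)
qed

lemma lin_act_scale: "act g (\<lambda>u. a * c u) = (\<lambda>u. a * act g c u)"
  by (cases "a = 0") (simp_all add: lin_act_def sum_distrib_left mult.assoc)

lemma lin_act_nonzeroD:
  fixes c :: "'w \<Rightarrow> 'k::field"
  assumes "act g c u \<noteq> 0"
  shows "\<exists>w. c w \<noteq> 0 \<and> basis_act w g u \<noteq> (0::'k)"
proof (rule ccontr)
  assume "\<not> ?thesis"
  then have "act g c u = 0"
    unfolding lin_act_def by (intro sum.neutral) auto
  with assms show False
    by simp
qed

lemma lin_act_in_Wsp:
  fixes c :: "'w \<Rightarrow> 'k::field"
  assumes closed: "\<And>w. w \<in> verts F \<Longrightarrow> (basis_act w g :: 'w \<Rightarrow> 'k) \<in> Wsp F"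
    and c: "c \<in> Wsp F"
  shows "act g c \<in> Wsp F"
proof -
  let ?S = "{w. c w \<noteq> 0}"
  let ?T = "\<Union>w\<in>?S. {u. basis_act w g u \<noteq> (0::'k)}"
  have "?S \<subseteq> verts F" "finite ?S"
    using c by (auto simp: Wsp_def)
  then have "finite ?T" "?T \<subseteq> verts F"
    using closed by (auto simp: Wsp_def)
  moreover have "{u. act g c u \<noteq> 0} \<subseteq> ?T"
    using lin_act_nonzeroD by fastforce
  ultimately show ?thesis
    by (rule Wsp_if_support_subset)
qed

lemma submodule_supported_in:
  assumes closed: "\<And>w g. w \<in> verts F \<Longrightarrow> (basis_act w g :: 'w \<Rightarrow> 'k::field) \<in> Wsp F"
    and D_closed: "\<And>w g u. w \<in> D \<Longrightarrow> (basis_act w g u :: 'k) \<noteq> 0 \<Longrightarrow> u \<in> D"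
  shows "submodule E sp F phiV phiE {c \<in> Wsp F. \<forall>u. c u \<noteq> (0::'k) \<longrightarrow> u \<in> D}"
proof -
  let ?U = "{c \<in> Wsp F. \<forall>u. c u \<noteq> (0::'k) \<longrightarrow> u \<in> D}"
  have add: "c + d \<in> ?U" if "c \<in> ?U" "d \<in> ?U" for c d
  proof -
    have "(c + d) u \<noteq> 0 \<Longrightarrow> c u \<noteq> 0 \<or> d u \<noteq> 0" for u
      by auto
    then show ?thesis
      using that Wsp_add[of c F d] by blast
  qed
  have scale: "(\<lambda>u. a * c u) \<in> ?U" if "c \<in> ?U" for a c
    using that Wsp_scale by auto
  have act: "act g c \<in> ?U" if c: "c \<in> ?U" for g c
  proof -
    have "u \<in> D" if "act g c u \<noteq> 0" for u
      using lin_act_nonzeroD[OF that] c D_closed by blast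
    then show ?thesis
      using c lin_act_in_Wsp[OF closed] by blast
  qed
  have "0 \<in> ?U"
    using Wsp_zero by simp
  then show ?thesis
    unfolding submodule_def using add scale act by blast
qed

lemma not_simple_if_closed_vertex_set:
  assumes closed: "\<And>w g. w \<in> verts F \<Longrightarrow> (basis_act w g :: 'w \<Rightarrow> 'k::field) \<in> Wsp F"
    and D_closed: "\<And>w g u. w \<in> D \<Longrightarrow> (basis_act w g u :: 'k) \<noteq> 0 \<Longrightarrow> u \<in> D"
    and "w \<in> verts F" "w \<in> D" "w' \<in> verts F" "w' \<notin> D"
  shows "\<not> simple_module E sp F phiV phiE TYPE('k)"
proof -
  let ?U = "{c \<in> Wsp F. \<forall>u. c u \<noteq> (0::'k) \<longrightarrow> u \<in> D}"
  have "bvec w \<in> ?U" "bvec w \<noteq> (0 :: 'w \<Rightarrow> 'k)"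
    using assms(3,4) bvec_in_Wsp by (auto simp: bvec_def fun_eq_iff)
  moreover have "bvec w' \<in> Wsp F - ?U"
    using assms(5,6) bvec_in_Wsp by (auto simp: bvec_def)
  moreover have "submodule E sp F phiV phiE ?U"
    using closed D_closed by (rule submodule_supported_in)
  ultimately show ?thesis
    unfolding simple_module_def by blast
qed

context
  fixes h :: "('w \<Rightarrow> 'k::field) \<Rightarrow> 'w \<Rightarrow> 'k"
  assumes h: "h \<in> End_mod E sp F phiV phiE"
begin

lemma End_mod_in_Wsp: "c \<in> Wsp F \<Longrightarrow> h c \<in> Wsp F"
  using h unfolding End_mod_def by blast

lemma End_mod_add: "c \<in> Wsp F \<Longrightarrow> d \<in> Wsp F \<Longrightarrow> h (c + d) = h c + h d"
  using h unfolding End_mod_def by blast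

lemma End_mod_scale: "c \<in> Wsp F \<Longrightarrow> h (\<lambda>u. a * c u) = (\<lambda>u. a * h c u)"
  using h unfolding End_mod_def by blast

lemma End_mod_zero: "h 0 = 0"
  using End_mod_scale[OF Wsp_zero, of 0] by (simp add: zero_fun_def)

lemma End_mod_lin_act: "g \<in> gens E \<Longrightarrow> c \<in> Wsp F \<Longrightarrow> h (act g c) = act g (h c)"
  using h unfolding End_mod_def by blast

lemma End_mod_scalar_propagates:
  assumes g: "g \<in> gens E" and p: "p \<in> verts F"
    and step: "(basis_act p g :: 'w \<Rightarrow> 'k) = bvec w"
    and hp: "h (bvec p) = (\<lambda>u. a * bvec p u)"
  shows "h (bvec w) = (\<lambda>u. a * bvec w u)"
proof -
  have "h (bvec w) = h (act g (bvec p))"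
    using step by (simp add: lin_act_bvec)
  also have "\<dots> = act g (h (bvec p))"
    using End_mod_lin_act[OF g bvec_in_Wsp[OF p]] .
  also have "\<dots> = (\<lambda>u. a * bvec w u)"
    using hp step by (simp add: lin_act_scale lin_act_bvec)
  finally show ?thesis .
qed

lemma End_mod_scalar_on_sum_bvec:
  assumes basis: "\<And>w. w \<in> verts F \<Longrightarrow> h (bvec w) = (\<lambda>u. a * bvec w u)"
    and "finite S" "S \<subseteq> verts F"
  shows "(\<Sum>w\<in>S. (\<lambda>u. k w * bvec w u)) \<in> Wsp F
      \<and> h (\<Sum>w\<in>S. (\<lambda>u. k w * bvec w u)) = (\<lambda>u. a * (\<Sum>w\<in>S. (\<lambda>u. k w * bvec w u)) u)"
  using assms(2,3)
proof (induction S rule: finite_induct)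
  case empty
  then show ?case
    using End_mod_zero Wsp_zero by (simp add: zero_fun_def)
next
  case (insert w S)
  let ?t = "\<lambda>u. k w * bvec w u" and ?s = "\<Sum>w\<in>S. (\<lambda>u. k w * bvec w u)"
  have w: "w \<in> verts F"
    using insert.prems by simp
  have t: "?t \<in> Wsp F" "h ?t = (\<lambda>u. a * ?t u)"
    using Wsp_scale[OF bvec_in_Wsp[OF w]] End_mod_scale[OF bvec_in_Wsp[OF w]] basis[OF w]
    by (simp_all add: mult.left_commute)
  have s: "?s \<in> Wsp F" "h ?s = (\<lambda>u. a * ?s u)"
    using insert by auto
  have "h (?t + ?s) = h ?t + h ?s"
    using End_mod_add[OF t(1) s(1)] .
  also have "\<dots> = (\<lambda>u. a * (?t + ?s) u)"
    unfolding t(2) s(2) by (simp add: fun_eq_iff distrib_left)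
  finally show ?case
    unfolding sum.insert[OF insert.hyps] using Wsp_add[OF t(1) s(1)] by blast
qed

lemma End_mod_scalar_if_scalar_on_basis:
  assumes "\<And>w. w \<in> verts F \<Longrightarrow> h (bvec w) = (\<lambda>u. a * bvec w u)" and c: "c \<in> Wsp F"
  shows "h c = (\<lambda>u. a * c u)"
proof -
  have "finite {w. c w \<noteq> 0}" "{w. c w \<noteq> 0} \<subseteq> verts F"
    using c by (auto simp: Wsp_def)
  from conjunct2[OF End_mod_scalar_on_sum_bvec[OF assms(1) this, of c]] show ?thesis
    unfolding Wsp_eq_sum_bvec[OF c, symmetric] .
qed

end

end

definition scalar_End :: "('w,'f) dgraph \<Rightarrow> 'k::field \<Rightarrow> ('w \<Rightarrow> 'k) \<Rightarrow> 'w \<Rightarrow> 'k" where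
  "scalar_End F a c = (if c \<in> Wsp F then (\<lambda>u. a * c u) else undefined)"

lemma scalar_End_in_End_mod:
  assumes closed: "\<And>g c. c \<in> Wsp F \<Longrightarrow> (lin_act E sp F phiV phiE g c :: 'w \<Rightarrow> 'k::field) \<in> Wsp F"
  shows "scalar_End F (a::'k) \<in> End_mod E sp F phiV phiE"
  unfolding End_mod_def mem_Collect_eq
proof (intro conjI ballI allI impI)
  fix c d :: "'w \<Rightarrow> 'k" assume c: "c \<in> Wsp F" and d: "d \<in> Wsp F"
  show "scalar_End F a (c + d) = scalar_End F a c + scalar_End F a d"
    using c d Wsp_add[OF c d] by (simp add: scalar_End_def fun_eq_iff distrib_left)
next
  fix b and c :: "'w \<Rightarrow> 'k" assume c: "c \<in> Wsp F"
  show "scalar_End F a (\<lambda>u. b * c u) = (\<lambda>u. b * scalar_End F a c u)"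
    using c Wsp_scale[OF c, of b] by (simp add: scalar_End_def mult.left_commute)
next
  fix g and c :: "'w \<Rightarrow> 'k" assume "g \<in> gens E" and c: "c \<in> Wsp F"
  show "scalar_End F a (lin_act E sp F phiV phiE g c) = lin_act E sp F phiV phiE g (scalar_End F a c)"
    using c closed[OF c] Wsp_scale[OF c] by (simp add: scalar_End_def lin_act_scale)
qed (simp_all add: scalar_End_def Wsp_scale)

lemma ring_iso_to_End_scalar_End:
  assumes closed: "\<And>g c. c \<in> Wsp F \<Longrightarrow> (lin_act E sp F phiV phiE g c :: 'w \<Rightarrow> 'k::field) \<in> Wsp F"
    and w: "w \<in> verts F"
    and scalar: "\<And>h :: ('w \<Rightarrow> 'k) \<Rightarrow> 'w \<Rightarrow> 'k. h \<in> End_mod E sp F phiV phiE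
                   \<Longrightarrow> \<exists>a. \<forall>c\<in>Wsp F. h c = (\<lambda>u. a * c u)"
  shows "ring_iso_to_End F (End_mod E sp F phiV phiE) (scalar_End F :: 'k \<Rightarrow> _)"
proof -
  have "inj (scalar_End F :: 'k \<Rightarrow> _)"
  proof (rule injI)
    fix a b :: 'k assume "scalar_End F a = scalar_End F b"
    moreover have "scalar_End F c (bvec w) = (\<lambda>u. c * bvec w u)" for c :: 'k
      using bvec_in_Wsp[OF w, where 'k = 'k] by (simp add: scalar_End_def)
    ultimately show "a = b"
      by (metis bvec_def mult.right_neutral)
  qed
  moreover have "End_mod E sp F phiV phiE \<subseteq> range (scalar_End F :: 'k \<Rightarrow> _)"
  proof
    fix h :: "('w \<Rightarrow> 'k) \<Rightarrow> 'w \<Rightarrow> 'k"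
    assume h: "h \<in> End_mod E sp F phiV phiE"
    then obtain a where "\<forall>c\<in>Wsp F. h c = (\<lambda>u. a * c u)"
      using scalar by blast
    with h have "h = scalar_End F a"
      by (auto simp: fun_eq_iff scalar_End_def End_mod_def)
    then show "h \<in> range (scalar_End F :: 'k \<Rightarrow> _)"
      by blast
  qed
  ultimately have "bij_betw (scalar_End F :: 'k \<Rightarrow> _) UNIV (End_mod E sp F phiV phiE)"
    using scalar_End_in_End_mod[OF closed] unfolding bij_betw_def by blast
  then show ?thesis
    unfolding ring_iso_to_End_def
    by (auto simp: scalar_End_def Wsp_scale fun_eq_iff distrib_right mult.assoc)
qed

section \<open>Basis paths and the graph \<open>F\<^sub>x\<close>\<close>

lemma special_unique: "special E sp e \<Longrightarrow> special E sp e' \<Longrightarrow> src E e = src E e' \<Longrightarrow> e = e'"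
  unfolding special_def by metis

lemma cyc_nth_Suc_pred:
  "1 \<le> i \<Longrightarrow> i \<le> length x \<Longrightarrow> cyc_nth x (Suc (if i = 1 then length x else i - 1)) = cyc_nth x i"
  unfolding cyc_nth_def by auto

lemma d_path_butlast: "d_path E ys \<Longrightarrow> length ys \<ge> 2 \<Longrightarrow> d_path E (butlast ys)"
  unfolding d_path_def
  by (cases ys rule: rev_cases) (auto simp: nth_append dest: in_set_butlastD)

lemma d_path_Cons_Cons: "d_path E (a # b # ys) \<Longrightarrow> d_rng E a = d_src E b"
  unfolding d_path_def by (auto dest: spec[where x=0])

lemma basis_path_d_path: "basis_path E sp ys \<Longrightarrow> d_path E ys"
  by (simp add: basis_path_def)

lemma basis_path_map_Real: "basis_path E sp (map Real p) \<longleftrightarrow> d_path E (map Real p)"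
  unfolding basis_path_def by (metis append.right_neutral list.map(1) rev.simps(1))

lemma basis_path_butlast:
  assumes "basis_path E sp ys" "length ys \<ge> 2"
  shows "basis_path E sp (butlast ys)"
proof -
  from assms(1) obtain p q where ys: "ys = map Real p @ map Ghost (rev q)"
    and cond: "p = [] \<or> q = [] \<or> last p \<noteq> last q \<or> \<not> special E sp (last p)"
    and "d_path E ys"
    unfolding basis_path_def by blast
  then have dp: "d_path E (butlast ys)"
    using assms(2) d_path_butlast by blast
  show ?thesis
  proof (cases q)
    case Nil
    then have "butlast ys = map Real (butlast p) @ map Ghost (rev [])"
      using ys by (simp add: map_butlast)
    then show ?thesis
      using dp unfolding basis_path_def by blast
  next
    case (Cons a q')
    then have "butlast ys = map Real p @ map Ghost (rev q')"
      using ys by (simp add: butlast_append)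
    moreover have "p = [] \<or> q' = [] \<or> last p \<noteq> last q' \<or> \<not> special E sp (last p)"
      using cond Cons by auto
    ultimately show ?thesis
      using dp unfolding basis_path_def by blast
  qed
qed

lemma Xset_nonempty: "y \<in> Xset E sp x i \<Longrightarrow> y \<noteq> []"
  unfolding Xset_def basis_path_def d_path_def by simp

lemma Xset_butlast:
  assumes "y \<in> Xset E sp x i" "length y \<noteq> 1"
  shows "butlast y \<in> Xset E sp x i" "hd (butlast y) = hd y"
proof -
  have "length y \<ge> 2"
    using assms(2) Xset_nonempty[OF assms(1)] by (cases y) (auto simp: Suc_le_eq)
  then have "hd (butlast y) = hd y"
    by (cases y) (auto simp: butlast_def split: list.splits)
  with \<open>length y \<ge> 2\<close> show "butlast y \<in> Xset E sp x i" "hd (butlast y) = hd y"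
    using assms(1) basis_path_butlast unfolding Xset_def by auto
qed

lemma rng_cyc_nth_eq_src_hd_Xset:
  "y \<in> Xset E sp x i \<Longrightarrow> hd y = Real e \<Longrightarrow> rng E (cyc_nth x i) = src E e"
  unfolding Xset_def using basis_path_d_path d_path_Cons_Cons by fastforce

context
  fixes E :: "('v,'e) dgraph" and sp :: "'v \<Rightarrow> 'e" and x :: "'e list"
begin

lemma Wm_in_Fx [simp]: "Wm i \<in> verts (Fx E sp x) \<longleftrightarrow> 1 \<le> i \<and> i \<le> length x"
  by (simp add: Fx_def)

lemma Wb_in_Fx [simp]:
  "Wb i y \<in> verts (Fx E sp x) \<longleftrightarrow> 1 \<le> i \<and> i \<le> length x \<and> y \<in> Xset E sp x i"
  by (simp add: Fx_def)

lemma Fm_in_Fx [simp]: "Fm i \<in> edges (Fx E sp x) \<longleftrightarrow> 1 \<le> i \<and> i \<le> length x"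
  by (simp add: Fx_def)

lemma Fb_in_Fx [simp]:
  "Fb i y \<in> edges (Fx E sp x) \<longleftrightarrow> 1 \<le> i \<and> i \<le> length x \<and> y \<in> Xset E sp x i"
  by (simp add: Fx_def)

lemma src_Fx_Fm [simp]: "src (Fx E sp x) (Fm i) = Wm (if i = 1 then length x else i - 1)"
  by (simp add: Fx_def)

lemma src_Fx_Fb [simp]:
  "src (Fx E sp x) (Fb i y) = (if length y = 1 then Wm i else Wb i (butlast y))"
  by (simp add: Fx_def)

lemma rng_Fx_Fm [simp]: "rng (Fx E sp x) (Fm i) = Wm i"
  by (simp add: Fx_def)

lemma rng_Fx_Fb [simp]: "rng (Fx E sp x) (Fb i y) = Wb i y"
  by (simp add: Fx_def)

lemma phiE_x_Fm [simp]: "phiE_x x (Fm i) = Real (cyc_nth x i)"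
  by (simp add: phiE_x_def)

lemma phiE_x_Fb [simp]: "phiE_x x (Fb i y) = last y"
  by (simp add: phiE_x_def)

lemma src_Fx_in_verts: "f \<in> edges (Fx E sp x) \<Longrightarrow> src (Fx E sp x) f \<in> verts (Fx E sp x)"
  by (cases f) (auto simp: Xset_butlast)

lemma rng_Fx_in_verts: "f \<in> edges (Fx E sp x) \<Longrightarrow> rng (Fx E sp x) f \<in> verts (Fx E sp x)"
  by (cases f) auto

lemma rng_Fx_eq_Wb: "f \<in> edges (Fx E sp x) \<Longrightarrow> rng (Fx E sp x) f = Wb i y \<Longrightarrow> f = Fb i y"
  by (cases f) auto

lemma Fx_out_Fb_unique:
  assumes "Fb i y \<in> edges (Fx E sp x)" "Fb j z \<in> edges (Fx E sp x)"
    and "src (Fx E sp x) (Fb i y) = src (Fx E sp x) (Fb j z)"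
    and "phiE_x x (Fb i y) = phiE_x x (Fb j z)"
  shows "Fb i y = Fb j z"
proof -
  have "y \<noteq> []" "z \<noteq> []"
    using assms(1,2) by (auto dest: Xset_nonempty)
  moreover from this have "i = j" "butlast y = butlast z"
    using assms(3) by (auto split: if_splits simp: length_Suc_conv)
  moreover have "last y = last z"
    using assms(4) by simp
  ultimately show ?thesis
    by (metis append_butlast_last_id)
qed

lemma src_Fx_eq_Wb:
  "f \<in> edges (Fx E sp x) \<Longrightarrow> src (Fx E sp x) f = Wb i y
    \<Longrightarrow> \<exists>z. f = Fb i z \<and> length z \<noteq> 1 \<and> butlast z = y \<and> z \<in> Xset E sp x i"
  by (cases f) (auto split: if_splits)

end

section \<open>The subtree below an exit\<close>

definition exit_branch :: "nat \<Rightarrow> 'e \<Rightarrow> 'e fvert set" where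
  "exit_branch i e = {Wb i y | y. y \<noteq> [] \<and> hd y = Real e}"

context
  fixes E :: "('v,'e) dgraph" and sp :: "'v \<Rightarrow> 'e" and x :: "'e list"
begin

lemma exit_branch_out:
  assumes f: "f \<in> edges (Fx E sp x)" and src: "src (Fx E sp x) f \<in> exit_branch i e"
  shows "rng (Fx E sp x) f \<in> exit_branch i e"
proof -
  obtain y where y: "src (Fx E sp x) f = Wb i y" "y \<noteq> []" "hd y = Real e"
    using src unfolding exit_branch_def by auto
  then obtain z where z: "f = Fb i z" "length z \<noteq> 1" "butlast z = y" "z \<in> Xset E sp x i"
    using src_Fx_eq_Wb f by blast
  then have "hd z = hd y"
    using Xset_butlast(2) by metis
  then show ?thesis
    using z y Xset_nonempty unfolding exit_branch_def by auto
qed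

lemma exit_branch_in:
  assumes f: "f \<in> edges (Fx E sp x)" and rng: "rng (Fx E sp x) f \<in> exit_branch i e"
    and label: "phiE_x x f \<noteq> Real e"
  shows "src (Fx E sp x) f \<in> exit_branch i e"
proof -
  obtain y where y: "rng (Fx E sp x) f = Wb i y" "y \<noteq> []" "hd y = Real e"
    using rng unfolding exit_branch_def by auto
  then have f_eq: "f = Fb i y"
    using rng_Fx_eq_Wb f by blast
  then have "y \<in> Xset E sp x i"
    using f by simp
  have "length y \<noteq> 1"
    using label y f_eq by (auto simp: length_Suc_conv)
  then have "butlast y \<noteq> []" "hd (butlast y) = Real e"
    using y Xset_butlast[OF \<open>y \<in> Xset E sp x i\<close>] by (auto simp: length_Suc_conv neq_Nil_conv)
  then show ?thesis
    using f_eq \<open>length y \<noteq> 1\<close> unfolding exit_branch_def by auto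
qed

lemma gen_act_exit_branch:
  assumes ns: "\<not> special E sp e" and w: "w \<in> exit_branch i e"
    and nz: "(gen_act E sp (Fx E sp x) (phiV_x E x) (phiE_x x) w g u :: 'k::field) \<noteq> 0"
  shows "u \<in> exit_branch i e"
proof (cases g)
  case (Gv v)
  then show ?thesis
    using nz w gen_act_Gv_nonzeroD by metis
next
  case (Ge d)
  then show ?thesis
    using gen_act_Ge_nonzeroD[OF nz[unfolded Ge]] w exit_branch_out exit_branch_in by fastforce
next
  case (Gs d)
  have src_in: "src (Fx E sp x) f \<in> exit_branch i e"
    if "f \<in> edges (Fx E sp x)" "rng (Fx E sp x) f = w" "phiE_x x f = Real d" "special E sp d" for f
    using that ns w exit_branch_in[OF that(1)] by auto
  from gen_act_Gs_nonzeroD[OF nz[unfolded Gs]] show ?thesis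
  proof (elim disjE conjE bexE)
    fix f assume "f \<in> edges (Fx E sp x)" "src (Fx E sp x) f = w" "u = rng (Fx E sp x) f"
    then show ?thesis
      using w exit_branch_out by blast
  next
    fix f assume "f \<in> edges (Fx E sp x)" "rng (Fx E sp x) f = w" "phiE_x x f = Real d"
      "special E sp d" "u = src (Fx E sp x) f"
    then show ?thesis
      using src_in by blast
  next
    fix f assume f: "f \<in> edges (Fx E sp x)" "rng (Fx E sp x) f = w" "phiE_x x f = Real d"
      "special E sp d" and Tsum: "(Tsum E (Fx E sp x) (phiE_x x) d f u :: 'k) \<noteq> 0"
    obtain g1 g2 where g: "g1 \<in> edges (Fx E sp x)" "g2 \<in> edges (Fx E sp x)"
      "src (Fx E sp x) g1 = src (Fx E sp x) f" "rng (Fx E sp x) g1 = src (Fx E sp x) g2"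
      "rng (Fx E sp x) g2 = u"
      using Tsum_nonzero_path[OF Tsum] by blast
    then show ?thesis
      using src_in[OF f] exit_branch_out[OF g(1)] exit_branch_out[OF g(2)] by simp
  qed
qed

end

section \<open>Degrees of basis paths\<close>

definition path_degree :: "'e dedge list \<Rightarrow> int" where
  "path_degree y = (\<Sum>d\<leftarrow>y. case d of Real _ \<Rightarrow> 1 | Ghost _ \<Rightarrow> -1)"

lemma path_degree_butlast:
  "y \<noteq> [] \<Longrightarrow>
    path_degree y = path_degree (butlast y) + (case last y of Real _ \<Rightarrow> 1 | Ghost _ \<Rightarrow> -1)"
  unfolding path_degree_def by (induction y rule: rev_induct) auto

lemma abs_path_degree_le: "\<bar>path_degree y\<bar> \<le> int (length y)"
  unfolding path_degree_def by (induction y) (auto split: dedge.split)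

definition verts_degree_ge :: "int \<Rightarrow> 'e fvert set" where
  "verts_degree_ge a = range Wm \<union> {Wb i y | i y. a \<le> path_degree y}"

lemma support_length_bound:
  assumes "finite {w. c w \<noteq> 0}"
  obtains B where "\<And>i y. c (Wb i y) \<noteq> 0 \<Longrightarrow> length y \<le> B"
proof
  let ?len = "\<lambda>w. case w of Wm _ \<Rightarrow> 0 | Wb _ y \<Rightarrow> length y"
  fix i y assume "c (Wb i y) \<noteq> 0"
  then show "length y \<le> Max (?len ` {w. c w \<noteq> 0})"
    using assms by (intro Max_ge) force+
qed

section \<open>A special cycle and its module\<close>

locale special_cycle =
  fixes E :: "('v,'e) dgraph" and sp :: "'v \<Rightarrow> 'e" and x :: "'e list"
  assumes wf: "wf_graph E" and row_finite: "row_finite E"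
    and cycle: "is_cycle E x" and special_x: "\<forall>e\<in>set x. special E sp e"
begin

abbreviation F :: "('e fvert, 'e fedge) dgraph" where
  "F \<equiv> Fx E sp x"

abbreviation actW :: "('v,'e) gen \<Rightarrow> ('e fvert \<Rightarrow> 'k::field) \<Rightarrow> 'e fvert \<Rightarrow> 'k" where
  "actW \<equiv> lin_act E sp F (phiV_x E x) (phiE_x x)"

abbreviation basis_actW :: "'e fvert \<Rightarrow> ('v,'e) gen \<Rightarrow> 'e fvert \<Rightarrow> 'k::field" where
  "basis_actW \<equiv> gen_act E sp F (phiV_x E x) (phiE_x x)"

abbreviation End_W :: "(('e fvert \<Rightarrow> 'k::field) \<Rightarrow> 'e fvert \<Rightarrow> 'k) set" where
  "End_W \<equiv> End_mod E sp F (phiV_x E x) (phiE_x x)"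

lemma length_x_pos: "0 < length x"
  using cycle unfolding is_cycle_def by simp

lemma cycle_edges: "set x \<subseteq> edges E"
  using cycle unfolding is_cycle_def by simp

lemma cyc_nth_in_set: "cyc_nth x i \<in> set x"
  using length_x_pos unfolding cyc_nth_def by simp

lemma nth_mod_in_set: "x ! (t mod length x) \<in> set x"
  using length_x_pos by simp

lemma Ge_cycle_edge_in_gens: "e \<in> set x \<Longrightarrow> Ge e \<in> gens E"
  using cycle_edges unfolding gens_def by blast

lemma rng_cyc_nth: "1 \<le> i \<Longrightarrow> rng E (cyc_nth x i) = src E (cyc_nth x (Suc i))"
proof -
  assume "1 \<le> i"
  define k where "k = (i - 1) mod length x"
  have k: "k < length x" "cyc_nth x i = x ! k" "cyc_nth x (Suc i) = x ! (Suc k mod length x)"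
    using length_x_pos \<open>1 \<le> i\<close> unfolding k_def cyc_nth_def by (auto simp: mod_Suc_eq)
  show ?thesis
  proof (cases "Suc k < length x")
    case True
    then show ?thesis
      using cycle k unfolding is_cycle_def by simp
  next
    case False
    then have "Suc k = length x"
      using k(1) by simp
    then have "k = length x - 1" "Suc k mod length x = 0"
      by simp_all
    then have "x ! k = last x" "x ! (Suc k mod length x) = hd x"
      using length_x_pos by (simp_all add: last_conv_nth hd_conv_nth)
    then show ?thesis
      using cycle k unfolding is_cycle_def by simp
  qed
qed

lemma phiV_x_Wm_inj:
  assumes "1 \<le> i" "i \<le> length x" "1 \<le> j" "j \<le> length x"
    and "phiV_x E x (Wm i) = phiV_x E x (Wm j)"
  shows "i = j"
proof -
  have "src E (cyc_nth x (Suc i)) = src E (cyc_nth x (Suc j))"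
    using assms rng_cyc_nth unfolding phiV_x_def by simp
  then have "src E (x ! (i mod length x)) = src E (x ! (j mod length x))"
    unfolding cyc_nth_def by simp
  then have "i mod length x = j mod length x"
    using cycle length_x_pos unfolding is_cycle_def inj_on_def by simp
  with assms(1-4) show ?thesis
    by (metis le_antisym le_neq_implies_less mod_less mod_self not_one_le_zero)
qed

lemma hd_Xset_not_cycle_edge:
  assumes y: "y \<in> Xset E sp x i" and "1 \<le> i" and e: "e \<in> set x"
  shows "hd y \<noteq> Real e"
proof
  assume hd: "hd y = Real e"
  have "src E e = rng E (cyc_nth x i)"
    using rng_cyc_nth_eq_src_hd_Xset[OF y hd] by simp
  also have "\<dots> = src E (cyc_nth x (Suc i))"
    using rng_cyc_nth[OF \<open>1 \<le> i\<close>] .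
  finally have "e = cyc_nth x (Suc i)"
    using special_x e cyc_nth_in_set by (auto intro: special_unique)
  then show False
    using y hd unfolding Xset_def by simp
qed

lemma Fx_out_Fm_Fb_labels_differ:
  assumes "Fm i \<in> edges F" "Fb j z \<in> edges F" "src F (Fm i) = src F (Fb j z)"
  shows "phiE_x x (Fm i) \<noteq> phiE_x x (Fb j z)"
proof
  assume label: "phiE_x x (Fm i) = phiE_x x (Fb j z)"
  from assms have z: "z \<in> Xset E sp x j" "length z = 1" "hd z = last z"
    and j: "j = (if i = 1 then length x else i - 1)" "1 \<le> i" "i \<le> length x"
    by (auto split: if_splits simp: length_Suc_conv)
  then have "cyc_nth x (Suc j) = cyc_nth x i"
    using cyc_nth_Suc_pred[OF j(2,3)] by simp
  with z label show False
    unfolding Xset_def by simp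
qed

lemma Fx_out_unique:
  assumes "f \<in> edges F" "g \<in> edges F" "src F f = src F g" "phiE_x x f = phiE_x x g"
  shows "f = g"
proof (cases f; cases g)
  fix i j assume "f = Fm i" "g = Fm j"
  then show ?thesis
    using assms by (auto split: if_splits)
next
  fix i j z assume "f = Fm i" "g = Fb j z"
  then show ?thesis
    using Fx_out_Fm_Fb_labels_differ[of i j z] assms by blast
next
  fix i y j assume "f = Fb i y" "g = Fm j"
  then show ?thesis
    using Fx_out_Fm_Fb_labels_differ[of j i y] assms by (metis (no_types))
next
  fix i y j z assume fg: "f = Fb i y" "g = Fb j z"
  have "Fb i y = Fb j z"
    using assms unfolding fg by (rule Fx_out_Fb_unique)
  then show ?thesis
    using fg by simp
qed

lemma some_out_edge_eq:
  assumes "f \<in> edges F" "phiE_x x f = l"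
  shows "(SOME g. g \<in> edges F \<and> src F g = src F f \<and> phiE_x x g = l) = f"
  using someI_bex[of "edges F" "\<lambda>g. src F g = src F f \<and> phiE_x x g = l"] assms Fx_out_unique
  by blast

lemma basis_actW_Ge_out:
  assumes "f \<in> edges F" "phiE_x x f = Real e"
  shows "basis_actW (src F f) (Ge e) = bvec (rng F f)"
  using assms some_out_edge_eq[OF assms] unfolding gen_act_def by auto

lemma basis_actW_Gs_out:
  assumes "f \<in> edges F" "phiE_x x f = Ghost e"
  shows "basis_actW (src F f) (Gs e) = bvec (rng F f)"
  using assms some_out_edge_eq[OF assms] unfolding gen_act_def by auto

lemma Tsum_in_Wsp:
  assumes e: "e \<in> edges E"
  shows "(Tsum E F (phiE_x x) e f :: _ \<Rightarrow> 'k::field) \<in> Wsp F"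
proof -
  define P where "P = {(g1,g2). g1 \<in> edges F \<and> g2 \<in> edges F
        \<and> src F g1 = src F f \<and> rng F g1 = src F g2
        \<and> (\<exists>d\<in>edges E. src E d = src E e \<and> d \<noteq> e
             \<and> phiE_x x g1 = Real d \<and> phiE_x x g2 = Ghost d)}"
  have support: "{u. (Tsum E F (phiE_x x) e f u :: 'k) \<noteq> 0} \<subseteq> (rng F \<circ> snd) ` P"
  proof
    fix u assume "u \<in> {u. (Tsum E F (phiE_x x) e f u :: 'k) \<noteq> 0}"
    then obtain g1 g2 where "(g1, g2) \<in> P" "rng F g2 = u"
      using Tsum_nonzeroD[of E F "phiE_x x" e f u] unfolding P_def by auto
    then show "u \<in> (rng F \<circ> snd) ` P"
      by force
  qed
  have "inj_on (\<lambda>(g1, g2). d_base (phiE_x x g1)) P"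
  proof (rule inj_onI, clarify)
    fix g1 g2 g1' g2'
    assume pairs: "(g1, g2) \<in> P" "(g1', g2') \<in> P"
      and "d_base (phiE_x x g1) = d_base (phiE_x x g1')"
    then have "g1 = g1'"
      unfolding P_def using Fx_out_unique by auto
    with pairs show "g1 = g1' \<and> g2 = g2'"
      unfolding P_def using Fx_out_unique by auto
  qed
  moreover have "(\<lambda>(g1, g2). d_base (phiE_x x g1)) ` P \<subseteq> {d \<in> edges E. src E d = src E e}"
    unfolding P_def by auto
  moreover have "finite {d \<in> edges E. src E d = src E e}"
    using row_finite wf e unfolding row_finite_def wf_graph_def by auto
  ultimately have "finite P"
    by (meson finite_imageD finite_subset)
  moreover have "(rng F \<circ> snd) ` P \<subseteq> verts F"
    unfolding P_def using rng_Fx_in_verts by auto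
  ultimately show ?thesis
    using support by (intro Wsp_if_support_subset[where S = "(rng F \<circ> snd) ` P"]) auto
qed

lemma basis_actW_in_Wsp:
  assumes "w \<in> verts F"
  shows "(basis_actW w g :: _ \<Rightarrow> 'k::field) \<in> Wsp F"
proof -
  have some_in: "(SOME f. f \<in> edges F \<and> P f) \<in> edges F" if "\<exists>f\<in>edges F. P f" for P
    using someI_bex[OF that] by blast
  have "(Tsum E F (phiE_x x) e f :: _ \<Rightarrow> 'k) \<in> Wsp F" if "special E sp e" for e f
    using that Tsum_in_Wsp unfolding special_def by blast
  then show ?thesis
    using assms
    by (cases g) (auto simp: gen_act_def Let_def
        intro!: bvec_in_Wsp Wsp_diff Wsp_zero src_Fx_in_verts rng_Fx_in_verts some_in)
qed

lemma actW_in_Wsp: "c \<in> Wsp F \<Longrightarrow> (actW g c :: _ \<Rightarrow> 'k::field) \<in> Wsp F"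
  by (rule lin_act_in_Wsp[OF basis_actW_in_Wsp])

lemma exit_in_Xset:
  assumes "has_exit E x"
  obtains i e where "1 \<le> i" "i \<le> length x" "\<not> special E sp e" "[Real e] \<in> Xset E sp x i"
proof -
  obtain e l where e: "e \<in> edges E" "l < length x" "src E e = src E (x ! l)" "e \<noteq> x ! l"
    using assms unfolding has_exit_def by blast
  have ns: "\<not> special E sp e"
    using special_unique special_x e nth_mem by metis
  define i where "i = (if l = 0 then length x else l)"
  have i: "1 \<le> i" "i \<le> length x" "cyc_nth x (Suc i) = x ! l"
    using e(2) length_x_pos unfolding i_def cyc_nth_def by auto
  have "cyc_nth x i \<in> edges E"
    using cyc_nth_in_set cycle_edges by blast
  then have "d_path E [Real (cyc_nth x i), Real e]" "d_path E [Real e]"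
    using e(1,3) rng_cyc_nth[OF i(1)] i(3) unfolding d_path_def by (auto simp: less_Suc_eq)
  then have "[Real e] \<in> Xset E sp x i"
    using basis_path_map_Real[of E sp "[cyc_nth x i, e]"] basis_path_map_Real[of E sp "[e]"]
      i(3) e(4) unfolding Xset_def by auto
  with i ns show ?thesis
    using that by blast
qed

theorem not_simple_W:
  assumes "has_exit E x"
  shows "\<not> simple_module E sp F (phiV_x E x) (phiE_x x) TYPE('k::field)"
proof -
  obtain i e where i: "1 \<le> i" "i \<le> length x"
    and ns: "\<not> special E sp e" and root: "[Real e] \<in> Xset E sp x i"
    using exit_in_Xset[OF assms] .
  show ?thesis
  proof (rule not_simple_if_closed_vertex_set[where D = "exit_branch i e" and w = "Wb i [Real e]"
        and w' = "Wm 1"])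
    fix w g u assume "w \<in> exit_branch i e" "(basis_actW w g u :: 'k) \<noteq> 0"
    then show "u \<in> exit_branch i e"
      by (rule gen_act_exit_branch[OF ns])
  qed (use basis_actW_in_Wsp i root length_x_pos in \<open>auto simp: exit_branch_def\<close>)
qed

lemma basis_actW_cycle_edge_degree:
  assumes e: "e \<in> set x" and w: "w \<in> verts_degree_ge a"
    and nz: "(basis_actW w (Ge e) u :: 'k::field) \<noteq> 0"
  shows "u \<in> verts_degree_ge (a + 1)"
  using gen_act_Ge_nonzeroD[OF nz]
proof (elim disjE bexE conjE)
  fix f assume f: "f \<in> edges F" "src F f = w" "phiE_x x f = Real e" "u = rng F f"
  show ?thesis
  proof (cases f)
    case (Fm j)
    then show ?thesis
      using f unfolding verts_degree_ge_def by auto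
  next
    case (Fb j z)
    have z: "z \<in> Xset E sp x j" "1 \<le> j" "z \<noteq> []"
      using f Fb by (auto dest: Xset_nonempty)
    have "length z \<noteq> 1"
      using hd_Xset_not_cycle_edge[OF z(1,2) e] f Fb by (auto simp: length_Suc_conv)
    then have "a \<le> path_degree (butlast z)"
      using f w Fb unfolding verts_degree_ge_def by auto
    then show ?thesis
      using f Fb path_degree_butlast[OF z(3)] unfolding verts_degree_ge_def by auto
  qed
next
  fix f assume f: "f \<in> edges F" "rng F f = w" "phiE_x x f = Ghost e" "u = src F f"
  then obtain j z where Fb: "f = Fb j z" and z: "z \<in> Xset E sp x j"
    by (cases f) auto
  then have "a \<le> path_degree z"
    using f w unfolding verts_degree_ge_def by auto
  then show ?thesis
    using f Fb path_degree_butlast[OF Xset_nonempty[OF z]] unfolding verts_degree_ge_def by auto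
qed

lemma actW_cycle_edge_degree:
  fixes c :: "'e fvert \<Rightarrow> 'k::field"
  assumes "e \<in> set x" and "\<And>w. c w \<noteq> 0 \<Longrightarrow> w \<in> verts_degree_ge a"
    and "actW (Ge e) c u \<noteq> 0"
  shows "u \<in> verts_degree_ge (a + 1)"
  using lin_act_nonzeroD[OF assms(3)] basis_actW_cycle_edge_degree[OF assms(1)] assms(2) by blast

lemma basis_actW_along_cycle:
  "basis_actW (Wm (t mod length x + 1)) (Ge (x ! (Suc t mod length x)))
     = (bvec (Wm (Suc t mod length x + 1)) :: _ \<Rightarrow> 'k::field)"
proof -
  let ?j = "Suc t mod length x + 1"
  have "Fm ?j \<in> edges F" "phiE_x x (Fm ?j) = Real (x ! (Suc t mod length x))"
    using length_x_pos by (simp_all add: Suc_le_eq cyc_nth_def)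
  moreover have "src F (Fm ?j) = Wm (t mod length x + 1)"
    using length_x_pos by (auto simp: mod_Suc)
  ultimately show ?thesis
    using basis_actW_Ge_out[of "Fm ?j"] by simp
qed

lemma basis_actW_to_child:
  assumes "Fb i y \<in> edges F"
  shows "\<exists>g\<in>gens E. basis_actW (src F (Fb i y)) g = (bvec (Wb i y) :: _ \<Rightarrow> 'k::field)"
proof -
  have "y \<in> Xset E sp x i"
    using assms by simp
  then have "d_base (last y) \<in> edges E"
    using Xset_nonempty unfolding Xset_def basis_path_def d_path_def by auto
  then show ?thesis
    using assms basis_actW_Ge_out[of "Fb i y"] basis_actW_Gs_out[of "Fb i y"]
    by (cases "last y") (auto simp: gens_def)
qed

context
  fixes h :: "('e fvert \<Rightarrow> 'k::field) \<Rightarrow> 'e fvert \<Rightarrow> 'k"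
  assumes h: "h \<in> End_W"
begin

lemma End_W_walk_degree:
  assumes start: "\<And>w. h (bvec (Wm 1)) w \<noteq> 0 \<Longrightarrow> w \<in> verts_degree_ge a"
  shows "h (bvec (Wm (t mod length x + 1))) w \<noteq> 0 \<Longrightarrow> w \<in> verts_degree_ge (a + int t)"
proof (induction t arbitrary: w)
  case 0
  then show ?case
    using start by simp
next
  case (Suc t)
  let ?e = "x ! (Suc t mod length x)"
  have "h (bvec (Wm (Suc t mod length x + 1))) = h (actW (Ge ?e) (bvec (Wm (t mod length x + 1))))"
    by (simp only: lin_act_bvec basis_actW_along_cycle)
  also have "\<dots> = actW (Ge ?e) (h (bvec (Wm (t mod length x + 1))))"
    using length_x_pos
    by (intro End_mod_lin_act[OF h] Ge_cycle_edge_in_gens nth_mod_in_set bvec_in_Wsp)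
      (simp add: Suc_le_eq)
  finally have "actW (Ge ?e) (h (bvec (Wm (t mod length x + 1)))) w \<noteq> 0"
    using Suc.prems by simp
  then have "w \<in> verts_degree_ge (a + int t + 1)"
    using actW_cycle_edge_degree[OF nth_mod_in_set] Suc.IH by blast
  then show ?case
    by (simp add: algebra_simps)
qed

lemma End_W_bvec_Wm1_supported_on_cycle:
  assumes nz: "h (bvec (Wm 1)) u \<noteq> 0"
  shows "u \<in> range Wm"
proof (cases u)
  case (Wb i y)
  have "h (bvec (Wm 1)) \<in> Wsp F"
    using length_x_pos by (intro End_mod_in_Wsp[OF h] bvec_in_Wsp) (simp add: Suc_le_eq)
  then obtain B where B: "\<And>i y. h (bvec (Wm 1)) (Wb i y) \<noteq> 0 \<Longrightarrow> length y \<le> B"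
    using support_length_bound unfolding Wsp_def by blast
  have "w \<in> verts_degree_ge (- int B)" if "h (bvec (Wm 1)) w \<noteq> 0" for w
  proof (cases w)
    case (Wb j z)
    then have "length z \<le> B"
      using that B by simp
    then show ?thesis
      using abs_path_degree_le[of z] Wb unfolding verts_degree_ge_def by auto
  qed (simp add: verts_degree_ge_def)
  \<comment> \<open>after \<open>(2 B + 1) m\<close> steps the walk is back at \<open>w\<^sub>1\<close>, but every tree vertex has gained
    more degree than \<open>|path_degree y| \<le> B\<close> allows\<close>
  then have "u \<in> verts_degree_ge (- int B + int ((2 * B + 1) * length x))"
    using End_W_walk_degree[of "- int B" "(2 * B + 1) * length x" u] nz by simp
  then have "int ((2 * B + 1) * length x) - int B \<le> path_degree y"
    using Wb unfolding verts_degree_ge_def by auto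
  moreover have "path_degree y \<le> int B"
    using abs_path_degree_le[of y] B nz Wb by fastforce
  moreover have "2 * B + 1 \<le> (2 * B + 1) * length x"
    using mult_le_mono2[OF Suc_leI[OF length_x_pos], of "2 * B + 1"] by simp
  ultimately show ?thesis
    by linarith
qed simp

lemma End_W_bvec_Wm1_eigen:
  "h (bvec (Wm 1)) = (\<lambda>u. h (bvec (Wm 1)) (Wm 1) * bvec (Wm 1) u)"
proof -
  let ?v = "phiV_x E x (Wm 1)" and ?c = "h (bvec (Wm 1))"
  have "cyc_nth x 1 \<in> edges E"
    using cyc_nth_in_set cycle_edges by blast
  then have gen: "Gv ?v \<in> gens E"
    using wf unfolding wf_graph_def gens_def phiV_x_def by simp
  have W1: "bvec (Wm 1) \<in> Wsp F"
    using length_x_pos by (intro bvec_in_Wsp) (simp add: Suc_le_eq)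
  have "actW (Gv ?v) (bvec (Wm 1)) = (bvec (Wm 1) :: _ \<Rightarrow> 'k)"
    by (simp add: lin_act_bvec gen_act_def)
  then have fixed: "actW (Gv ?v) ?c = ?c"
    using End_mod_lin_act[OF h gen W1] by simp
  have "u = Wm 1" if nz: "?c u \<noteq> 0" for u
  proof -
    obtain i where i: "u = Wm i"
      using End_W_bvec_Wm1_supported_on_cycle[OF nz] by blast
    have "u \<in> verts F"
      using End_mod_in_Wsp[OF h W1] nz unfolding Wsp_def by blast
    moreover have "actW (Gv ?v) ?c u \<noteq> 0"
      using nz fixed by simp
    then obtain w where "(basis_actW w (Gv ?v) u :: 'k) \<noteq> 0"
      using lin_act_nonzeroD by fast
    then have "phiV_x E x u = ?v"
      using gen_act_Gv_nonzeroD by fast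
    ultimately show ?thesis
      using i phiV_x_Wm_inj length_x_pos by (simp add: Suc_le_eq)
  qed
  then show ?thesis
    by (auto simp: fun_eq_iff bvec_def)
qed

lemma End_W_scalar_on_cycle:
  assumes a: "h (bvec (Wm 1)) = (\<lambda>u. a * bvec (Wm 1) u)" and i: "1 \<le> i" "i \<le> length x"
  shows "h (bvec (Wm i)) = (\<lambda>u. a * bvec (Wm i) u)"
proof -
  have "h (bvec (Wm (t mod length x + 1))) = (\<lambda>u. a * bvec (Wm (t mod length x + 1)) u)" for t
  proof (induction t)
    case 0
    then show ?case
      using a by simp
  next
    case (Suc t)
    then show ?case
      using End_mod_scalar_propagates[OF h Ge_cycle_edge_in_gens[OF nth_mod_in_set] _
          basis_actW_along_cycle Suc.IH] length_x_pos
      by (simp add: Suc_le_eq)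
  qed
  from this[of "i - 1"] i show ?thesis
    by simp
qed

lemma End_W_scalar_on_verts:
  assumes a: "h (bvec (Wm 1)) = (\<lambda>u. a * bvec (Wm 1) u)" and w: "w \<in> verts F"
  shows "h (bvec w) = (\<lambda>u. a * bvec w u)"
proof -
  have "h (bvec (Wb i y)) = (\<lambda>u. a * bvec (Wb i y) u)" if "Wb i y \<in> verts F" for i y
    using that
  proof (induction y rule: rev_induct)
    case Nil
    then show ?case
      by (auto dest: Xset_nonempty)
  next
    case (snoc d y)
    let ?p = "src F (Fb i (y @ [d]))"
    have edge: "Fb i (y @ [d]) \<in> edges F"
      using snoc.prems by simp
    then have parent: "h (bvec ?p) = (\<lambda>u. a * bvec ?p u)"
      using snoc.IH End_W_scalar_on_cycle[OF a] src_Fx_in_verts[OF edge] by auto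
    obtain g where "g \<in> gens E" "basis_actW ?p g = (bvec (Wb i (y @ [d])) :: _ \<Rightarrow> 'k)"
      using basis_actW_to_child[OF edge] by blast
    from End_mod_scalar_propagates[OF h this(1) src_Fx_in_verts[OF edge] this(2) parent]
    show ?case .
  qed
  then show ?thesis
    using End_W_scalar_on_cycle[OF a] w by (cases w) auto
qed

lemma End_W_scalar: "\<exists>a. \<forall>c\<in>Wsp F. h c = (\<lambda>u. a * c u)"
  using End_mod_scalar_if_scalar_on_basis[OF h End_W_scalar_on_verts[OF End_W_bvec_Wm1_eigen]]
  by blast

end

theorem ring_iso_to_End_W: "ring_iso_to_End F End_W (scalar_End F :: 'k::field \<Rightarrow> _)"
  using actW_in_Wsp length_x_pos End_W_scalar
  by (intro ring_iso_to_End_scalar_End[where w = "Wm 1"]) (auto simp: Suc_le_eq)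

end

theorem theorem6p1:
  fixes E :: "('v,'e) dgraph" and sp :: "'v \<Rightarrow> 'e" and x :: "'e list"
  assumes "wf_graph E" and "row_finite E" and "special_choice E sp"
    and "is_cycle E x" and "\<forall>e\<in>set x. special E sp e" and "has_exit E x"
  shows "\<not> simple_module E sp (Fx E sp x) (phiV_x E x) (phiE_x x) TYPE('k::field)
     \<and> (\<exists>\<Phi> :: 'k \<Rightarrow> ((_ \<Rightarrow> 'k) \<Rightarrow> (_ \<Rightarrow> 'k)).
          ring_iso_to_End (Fx E sp x) (End_mod E sp (Fx E sp x) (phiV_x E x) (phiE_x x)) \<Phi>)"
proof -
  interpret special_cycle E sp x
    using assms by (simp add: special_cycle_def)
  show ?thesis
    using not_simple_W[OF \<open>has_exit E x\<close>] ring_iso_to_End_W by blast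
qed

end
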